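(* Let $r>1$ and integer $K\ge2$. Let $\gamma^*(r,K,1)$ be the supremum of $\sum_{i=1}^{K-1}\frac{p^i}{\sum_{j=i}^Kp^j}$ over all $p=(p^1,\dots,p^K)$ with $p^K=1/r$, $\sum_ip^i=1$, $p^i>0$. Then $$\gamma^*(r,K,1)=(K-1)\left(1-r^{-\frac{1}{K-1}}\right),$$ and $\eta(r,K,1)=\gamma^*(r,K,1)/(1+\gamma^*(r,K,1))$.
   Context: Single item auction with one buyer whose value takes values $0<x^1<\dots<x^K$ with probabilities $p^i>0$, $\sum_ip^i=1$. Let $t(x,p)=\max\{i: i\in\arg\max_{1\le k\le K}x^k\sum_{j=k}^Kp^j\}$ (the index of the optimal posted price). The efficiency loss ratio of the revenue-optimal auction is $\mathrm{ELR}_1(x,p)=\sum_{i=1}^{t(x,p)-1}p^ix^i/\sum_{i=1}^Kp^ix^i$. $\eta(r,K,1)$ is the supremum of $\mathrm{ELR}_1(x,p)$ over all such $p$ and all $x$ with $0<x^1<\dots<x^K\le rx^1$. *)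

theory Defs
  imports Complex_Main
begin

text \<open>Values x^1..x^K and probabilities p^1..p^K are functions on nat, indices 1..K.\<close>

definition rev_obj :: "nat \<Rightarrow> (nat \<Rightarrow> real) \<Rightarrow> (nat \<Rightarrow> real) \<Rightarrow> nat \<Rightarrow> real" where
  "rev_obj K x p k = x k * (\<Sum>j=k..K. p j)"

definition opt_index :: "nat \<Rightarrow> (nat \<Rightarrow> real) \<Rightarrow> (nat \<Rightarrow> real) \<Rightarrow> nat" where
  "opt_index K x p = Max {i \<in> {1..K}. \<forall>k\<in>{1..K}. rev_obj K x p k \<le> rev_obj K x p i}"

definition ELR1 :: "nat \<Rightarrow> (nat \<Rightarrow> real) \<Rightarrow> (nat \<Rightarrow> real) \<Rightarrow> real" where
  "ELR1 K x p = (\<Sum>i=1..opt_index K x p - 1. p i * x i) / (\<Sum>i=1..K. p i * x i)"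

definition valid_prob :: "nat \<Rightarrow> (nat \<Rightarrow> real) \<Rightarrow> bool" where
  "valid_prob K p \<longleftrightarrow> (\<forall>i\<in>{1..K}. p i > 0) \<and> (\<Sum>i=1..K. p i) = 1"

definition valid_vals :: "real \<Rightarrow> nat \<Rightarrow> (nat \<Rightarrow> real) \<Rightarrow> bool" where
  "valid_vals r K x \<longleftrightarrow> 0 < x 1 \<and> (\<forall>i\<in>{1..K}. \<forall>j\<in>{1..K}. i < j \<longrightarrow> x i < x j) \<and> x K \<le> r * x 1"

definition eta :: "real \<Rightarrow> nat \<Rightarrow> real" where
  "eta r K = Sup {ELR1 K x p | x p. valid_vals r K x \<and> valid_prob K p}"

definition gamma_star :: "real \<Rightarrow> nat \<Rightarrow> real" where
  "gamma_star r K = Sup {(\<Sum>i=1..K-1. p i / (\<Sum>j=i..K. p j)) | p.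
      valid_prob K p \<and> p K = 1 / r}"

end

theory Submission
  imports Defs
begin

text \<open>
  Write \<open>S\<^sub>i = p\<^sup>i + \<dots> + p\<^sup>K\<close> for the tail probabilities and let \<open>q\<^sup>K\<^sup>-\<^sup>1 = 1/r\<close>.
  Since \<open>p\<^sup>i/S\<^sub>i = 1 - S\<^sub>i\<^sub>+\<^sub>1/S\<^sub>i\<close>, the tangent line of \<open>ln\<close> at \<open>q\<close> bounds each term by
  \<open>1 - q - q ln (S\<^sub>i\<^sub>+\<^sub>1/(q S\<^sub>i))\<close>; the logarithms telescope and the tail \<open>S\<^sub>K = 1/r = q\<^sup>K\<^sup>-\<^sup>1\<close>
  forces the sum below \<open>(K-1)(1-q)\<close>. The geometric distribution \<open>S\<^sub>i = q\<^sup>i\<^sup>-\<^sup>1\<close> attains it.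
  For the auction, the optimal price \<open>x\<^sup>t\<close> earns \<open>R = x\<^sup>t S\<^sub>t\<close> with \<open>S\<^sub>t \<ge> 1/r\<close> (compare with
  the price \<open>x\<^sup>1\<close>), and every excluded type satisfies \<open>x\<^sup>i \<le> R/S\<^sub>i\<close>, so the lost welfare is at
  most \<open>R \<gamma>\<^sup>*\<close> while the total welfare is at least that plus \<open>R\<close>. Equality holds for the
  geometric distribution with values \<open>x\<^sup>i = q\<^sup>1\<^sup>-\<^sup>i\<close>, where all prices are equally profitable
  and the tie is broken towards the highest one.
\<close>

lemma ln_tangent_le:
  fixes c s :: real
  assumes "0 < c" "0 < s"
  shows "c * (1 + ln s - ln c) \<le> s"
proof -
  have "ln (s / c) \<le> s / c - 1" using assms by (intro ln_le_minus_one) auto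
  hence "c * (ln s - ln c) \<le> c * (s / c - 1)"
    using assms by (intro mult_left_mono) (auto simp: ln_div)
  thus ?thesis using assms by (simp add: algebra_simps)
qed

lemma sum_one_minus_ratio_le:
  fixes S :: "nat \<Rightarrow> real" and m n :: nat and q :: real
  assumes pos: "\<And>i. 1 \<le> i \<Longrightarrow> i \<le> Suc m \<Longrightarrow> 0 < S i"
    and "m \<le> n" "0 < q" "q < 1"
    and decay: "q ^ n * S 1 \<le> S (Suc m)"
  shows "(\<Sum>i=1..m. 1 - S (Suc i) / S i) \<le> real n * (1 - q)"
proof -
  have term_le: "1 - S (Suc i) / S i \<le> (1 - q) + q * ln q - q * (ln (S (Suc i)) - ln (S i))"
    if "i \<in> {1..m}" for i
  proof -
    have "S i > 0" "S (Suc i) > 0" using that pos by auto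
    with ln_tangent_le[of q "S (Suc i) / S i"] \<open>0 < q\<close> show ?thesis
      by (simp add: ln_div algebra_simps)
  qed
  have telescope: "(\<Sum>i=1..m. ln (S (Suc i)) - ln (S i)) = ln (S (Suc m)) - ln (S 1)"
    by (rule sum_Suc_diff) simp
  have "(\<Sum>i=1..m. 1 - S (Suc i) / S i)
      \<le> (\<Sum>i=1..m. (1 - q) + q * ln q - q * (ln (S (Suc i)) - ln (S i)))"
    using term_le by (rule sum_mono)
  also have "\<dots> = real m * ((1 - q) + q * ln q) - q * (\<Sum>i=1..m. ln (S (Suc i)) - ln (S i))"
    by (simp add: sum.distrib sum_subtractf sum_distrib_left[symmetric] right_diff_distrib[symmetric])
  also note telescope
  finally have bound: "(\<Sum>i=1..m. 1 - S (Suc i) / S i)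
      \<le> real m * ((1 - q) + q * ln q) - q * (ln (S (Suc m)) - ln (S 1))" .
  have "ln (q ^ n * S 1) \<le> ln (S (Suc m))"
    using decay pos[of 1] \<open>0 < q\<close> by (intro ln_mono) auto
  hence "real n * ln q \<le> ln (S (Suc m)) - ln (S 1)"
    using pos[of 1] \<open>0 < q\<close> by (simp add: ln_mult ln_realpow)
  hence log_decay: "q * (real n * ln q) \<le> q * (ln (S (Suc m)) - ln (S 1))"
    using \<open>0 < q\<close> by (intro mult_left_mono) auto
  have "q * (1 - ln q) \<le> 1"
    using ln_tangent_le[of q 1] \<open>0 < q\<close> by simp
  hence "(real n - real m) * (q * (- ln q)) \<le> (real n - real m) * (1 - q)"
    using \<open>m \<le> n\<close> by (intro mult_left_mono) (auto simp: algebra_simps)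
  with bound log_decay show ?thesis by (simp add: algebra_simps)
qed

lemma tail_sum_pos:
  assumes "valid_prob K p" "1 \<le> i" "i \<le> K"
  shows "0 < (\<Sum>j=i..K. p j)"
  using assms unfolding valid_prob_def by (intro sum_pos) auto

lemma hazard_eq_one_minus_tail_ratio:
  assumes "valid_prob K p" "1 \<le> i" "i < K"
  shows "p i / (\<Sum>j=i..K. p j) = 1 - (\<Sum>j=Suc i..K. p j) / (\<Sum>j=i..K. p j)"
proof -
  have "0 < (\<Sum>j=i..K. p j)" using assms by (intro tail_sum_pos) auto
  thus ?thesis using \<open>i < K\<close> by (simp add: sum.atLeast_Suc_atMost field_simps)
qed

lemma sum_hazard_le:
  fixes q :: real
  assumes p: "valid_prob K p" and t: "1 \<le> t" "t \<le> K"
    and "0 < q" "q < 1" and tail_t: "q ^ (K - 1) \<le> (\<Sum>j=t..K. p j)"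
  shows "(\<Sum>i=1..t-1. p i / (\<Sum>j=i..K. p j)) \<le> real (K - 1) * (1 - q)"
proof -
  define S where "S i = (\<Sum>j=i..K. p j)" for i
  have "(\<Sum>i=1..t-1. p i / S i) = (\<Sum>i=1..t-1. 1 - S (Suc i) / S i)"
    using t by (intro sum.cong) (auto simp: S_def intro!: hazard_eq_one_minus_tail_ratio[OF p])
  also have "\<dots> \<le> real (K - 1) * (1 - q)"
  proof (rule sum_one_minus_ratio_le)
    show "0 < S i" if "1 \<le> i" "i \<le> Suc (t - 1)" for i
      using that t unfolding S_def by (intro tail_sum_pos[OF p]) auto
    have "S 1 = 1" using p by (simp add: S_def valid_prob_def)
    thus "q ^ (K - 1) * S 1 \<le> S (Suc (t - 1))" using tail_t t by (simp add: S_def)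
  qed (use t \<open>0 < q\<close> \<open>q < 1\<close> in auto)
  finally show ?thesis by (simp add: S_def)
qed

lemma opt_index_optimal:
  assumes "1 \<le> K"
  shows "opt_index K x p \<in> {1..K}"
    and "\<And>k. k \<in> {1..K} \<Longrightarrow> rev_obj K x p k \<le> rev_obj K x p (opt_index K x p)"
proof -
  define M where "M = {i \<in> {1..K}. \<forall>k\<in>{1..K}. rev_obj K x p k \<le> rev_obj K x p i}"
  have "Max (rev_obj K x p ` {1..K}) \<in> rev_obj K x p ` {1..K}"
    using assms by (intro Max_in) auto
  then obtain i where "i \<in> {1..K}" "rev_obj K x p i = Max (rev_obj K x p ` {1..K})"
    by auto
  hence "i \<in> M" by (auto simp: M_def)
  hence "Max M \<in> M" by (intro Max_in) (auto simp: M_def)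
  moreover have "opt_index K x p = Max M" by (simp add: opt_index_def M_def)
  ultimately show "opt_index K x p \<in> {1..K}"
    and "\<And>k. k \<in> {1..K} \<Longrightarrow> rev_obj K x p k \<le> rev_obj K x p (opt_index K x p)"
    by (auto simp: M_def)
qed

lemma valid_vals_mono:
  assumes "valid_vals r K x" "i \<in> {1..K}" "j \<in> {1..K}" "i \<le> j"
  shows "x i \<le> x j"
  using assms unfolding valid_vals_def by (cases "i = j") (auto intro: less_imp_le)

lemma valid_vals_pos:
  assumes "valid_vals r K x" "i \<in> {1..K}"
  shows "0 < x i"
  using valid_vals_mono[OF assms(1), of 1 i] assms unfolding valid_vals_def by auto

lemma tail_at_opt_index_ge:
  assumes x: "valid_vals r K x" and p: "valid_prob K p" and "1 \<le> K"
  shows "1 / r \<le> (\<Sum>j=opt_index K x p..K. p j)"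
proof -
  define t where "t = opt_index K x p"
  define S where "S = (\<Sum>j=t..K. p j)"
  have t: "t \<in> {1..K}" using opt_index_optimal(1)[OF \<open>1 \<le> K\<close>] by (simp add: t_def)
  have "S > 0" using t unfolding S_def by (intro tail_sum_pos[OF p]) auto
  have "x 1 = rev_obj K x p 1" using p by (simp add: rev_obj_def valid_prob_def)
  also have "\<dots> \<le> x t * S"
    using opt_index_optimal(2)[of K 1] \<open>1 \<le> K\<close> by (simp add: t_def S_def rev_obj_def)
  also have "\<dots> \<le> r * x 1 * S"
    using valid_vals_mono[OF x t, of K] x t \<open>S > 0\<close> \<open>1 \<le> K\<close>
    by (intro mult_right_mono) (auto simp: valid_vals_def)
  finally have "1 \<le> r * S"
    using valid_vals_pos[OF x, of 1] \<open>1 \<le> K\<close> by (simp add: mult.assoc)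
  moreover from this have "0 < r" using \<open>S > 0\<close> by (smt (verit) mult_nonpos_nonneg)
  ultimately show ?thesis by (simp add: S_def t_def divide_le_eq mult.commute)
qed

lemma lost_welfare_le:
  fixes x p :: "nat \<Rightarrow> real"
  assumes p: "valid_prob K p" and "1 \<le> K"
  defines "t \<equiv> opt_index K x p"
  shows "(\<Sum>i=1..t-1. p i * x i) \<le> rev_obj K x p t * (\<Sum>i=1..t-1. p i / (\<Sum>j=i..K. p j))"
  unfolding sum_distrib_left
proof (rule sum_mono)
  fix i assume "i \<in> {1..t-1}"
  hence i: "i \<in> {1..K}" using opt_index_optimal(1)[OF \<open>1 \<le> K\<close>, of x p] by (auto simp: t_def)
  have "0 < (\<Sum>j=i..K. p j)" using i by (intro tail_sum_pos[OF p]) auto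
  moreover have "x i * (\<Sum>j=i..K. p j) \<le> rev_obj K x p t"
    using opt_index_optimal(2)[OF \<open>1 \<le> K\<close> i] by (simp add: t_def rev_obj_def)
  ultimately have "x i \<le> rev_obj K x p t / (\<Sum>j=i..K. p j)" by (simp add: field_simps)
  hence "p i * x i \<le> p i * (rev_obj K x p t / (\<Sum>j=i..K. p j))"
    using p i by (intro mult_left_mono) (auto simp: valid_prob_def intro: less_imp_le)
  thus "p i * x i \<le> rev_obj K x p t * (p i / (\<Sum>j=i..K. p j))" by (simp add: mult.commute)
qed

lemma welfare_ge_lost_plus_revenue:
  assumes x: "valid_vals r K x" and p: "valid_prob K p" and "1 \<le> K"
  defines "t \<equiv> opt_index K x p"
  shows "(\<Sum>i=1..t-1. p i * x i) + rev_obj K x p t \<le> (\<Sum>i=1..K. p i * x i)"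
proof -
  have t: "t \<in> {1..K}" using opt_index_optimal(1)[OF \<open>1 \<le> K\<close>] by (simp add: t_def)
  have "rev_obj K x p t = (\<Sum>i=t..K. p i * x t)"
    by (simp add: rev_obj_def sum_distrib_left mult.commute)
  also have "\<dots> \<le> (\<Sum>i=t..K. p i * x i)"
    using p t by (intro sum_mono mult_left_mono valid_vals_mono[OF x])
      (auto simp: valid_prob_def intro: less_imp_le)
  also have "(\<Sum>i=1..t-1. p i * x i) + (\<Sum>i=t..K. p i * x i) = (\<Sum>i=1..K. p i * x i)"
    using t by (subst sum.union_disjoint[symmetric]) (auto intro!: sum.cong)
  finally show ?thesis by simp
qed

lemma ELR1_le:
  fixes q :: real
  assumes x: "valid_vals r K x" and p: "valid_prob K p" and "1 \<le> K"
    and "0 < q" "q < 1" "q ^ (K - 1) \<le> 1 / r"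
  defines "G \<equiv> real (K - 1) * (1 - q)"
  shows "ELR1 K x p \<le> G / (1 + G)"
proof -
  define t where "t = opt_index K x p"
  define L where "L = (\<Sum>i=1..t-1. p i * x i)"
  define R where "R = rev_obj K x p t"
  define W where "W = (\<Sum>i=1..K. p i * x i)"
  have t: "t \<in> {1..K}" using opt_index_optimal(1)[OF \<open>1 \<le> K\<close>] by (simp add: t_def)
  have "0 < R"
    using t valid_vals_pos[OF x t] tail_sum_pos[OF p] by (simp add: R_def rev_obj_def)
  have "0 \<le> L" unfolding L_def using t p valid_vals_pos[OF x]
    by (intro sum_nonneg mult_nonneg_nonneg) (auto simp: valid_prob_def less_imp_le)
  have "0 \<le> G" using \<open>q < 1\<close> by (simp add: G_def)
  have "q ^ (K - 1) \<le> (\<Sum>j=t..K. p j)"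
    using tail_at_opt_index_ge[OF x p \<open>1 \<le> K\<close>] assms(6) by (simp add: t_def)
  hence "(\<Sum>i=1..t-1. p i / (\<Sum>j=i..K. p j)) \<le> G"
    using t \<open>0 < q\<close> \<open>q < 1\<close> unfolding G_def by (intro sum_hazard_le[OF p]) auto
  hence "L \<le> R * G"
    using lost_welfare_le[OF p \<open>1 \<le> K\<close>, of x] \<open>0 < R\<close>
    by (simp add: L_def R_def t_def) (meson mult_left_mono less_imp_le order_trans)
  moreover have "L + R \<le> W"
    using welfare_ge_lost_plus_revenue[OF x p \<open>1 \<le> K\<close>] by (simp add: L_def R_def W_def t_def)
  ultimately have "L * (1 + G) \<le> G * W" and "0 < W"
    using \<open>0 \<le> G\<close> \<open>0 \<le> L\<close> \<open>0 < R\<close> mult_left_mono[of "L + R" W G]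
    by (auto simp: algebra_simps)
  hence "L / W \<le> G / (1 + G)" using \<open>0 \<le> G\<close> by (simp add: field_simps)
  thus ?thesis by (simp add: ELR1_def L_def W_def t_def)
qed

definition geom_prob :: "nat \<Rightarrow> real \<Rightarrow> nat \<Rightarrow> real" where
  "geom_prob K q j = (if j < K then q ^ (j - 1) - q ^ j else q ^ (K - 1))"

definition geom_vals :: "real \<Rightarrow> nat \<Rightarrow> real" where
  "geom_vals q i = (1 / q) ^ (i - 1)"

lemma tail_geom_prob:
  assumes "1 \<le> i" "i \<le> K"
  shows "(\<Sum>j=i..K. geom_prob K q j) = q ^ (i - 1)"
  using assms(2,1)
proof (induction i rule: inc_induct)
  case (step i)
  thus ?case by (simp add: sum.atLeast_Suc_atMost geom_prob_def)
qed (simp add: geom_prob_def)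

lemma valid_prob_geom_prob:
  assumes "0 < q" "q < 1" "1 \<le> K"
  shows "valid_prob K (geom_prob K q)"
proof -
  have "0 < geom_prob K q i" if "1 \<le> i" for i
  proof -
    have "q ^ (i - 1) * q < q ^ (i - 1)" using assms by simp
    moreover have "q ^ i = q ^ (i - 1) * q" using that by (cases i) auto
    ultimately show ?thesis using assms by (simp add: geom_prob_def)
  qed
  thus ?thesis using tail_geom_prob[of 1 K q] assms by (simp add: valid_prob_def)
qed

lemma hazard_geom_prob:
  assumes "0 < q" "1 \<le> i" "i < K"
  shows "geom_prob K q i / (\<Sum>j=i..K. geom_prob K q j) = 1 - q"
proof -
  have "q ^ i = q ^ (i - 1) * q" using assms by (cases i) auto
  thus ?thesis using assms tail_geom_prob[of i K q] by (simp add: geom_prob_def field_simps)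
qed

lemma sum_hazard_geom_prob:
  assumes "0 < q"
  shows "(\<Sum>i=1..K-1. geom_prob K q i / (\<Sum>j=i..K. geom_prob K q j)) = real (K - 1) * (1 - q)"
proof -
  have "(\<Sum>i=1..K-1. geom_prob K q i / (\<Sum>j=i..K. geom_prob K q j)) = (\<Sum>i=1..K-1. 1 - q)"
    using hazard_geom_prob[OF assms] by (intro sum.cong) auto
  thus ?thesis by simp
qed

lemma valid_vals_geom_vals:
  assumes "0 < q" "q < 1" "q ^ (K - 1) = 1 / r"
  shows "valid_vals r K (geom_vals q)"
  unfolding valid_vals_def
proof (intro conjI ballI impI)
  show "0 < geom_vals q 1" by (simp add: geom_vals_def)
  show "geom_vals q i < geom_vals q j" if "i \<in> {1..K}" "j \<in> {1..K}" "i < j" for i j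
    unfolding geom_vals_def using that assms by (intro power_strict_increasing) auto
  show "geom_vals q K \<le> r * geom_vals q 1"
    using assms by (simp add: geom_vals_def power_one_over)
qed

text \<open>Every price is equally profitable here, so the tie-break of \<^const>\<open>opt_index\<close> towards the
  highest price makes all types but the top one lose the item.\<close>

lemma ELR1_geom:
  assumes "0 < q" "1 \<le> K"
  defines "G \<equiv> real (K - 1) * (1 - q)"
  shows "ELR1 K (geom_vals q) (geom_prob K q) = G / (1 + G)"
proof -
  have welfare: "geom_prob K q i * geom_vals q i
      = geom_prob K q i / (\<Sum>j=i..K. geom_prob K q j)" if "i \<in> {1..K}" for i
    using that assms tail_geom_prob[of i K q] by (simp add: geom_vals_def power_one_over)
  have "rev_obj K (geom_vals q) (geom_prob K q) k = 1" if "k \<in> {1..K}" for k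
    using that assms tail_geom_prob[of k K q] by (simp add: rev_obj_def geom_vals_def power_one_over)
  hence "{i \<in> {1..K}. \<forall>k\<in>{1..K}. rev_obj K (geom_vals q) (geom_prob K q) k
      \<le> rev_obj K (geom_vals q) (geom_prob K q) i} = {1..K}"
    by auto
  hence "opt_index K (geom_vals q) (geom_prob K q) = Max {1..K}"
    unfolding opt_index_def by simp
  also have "\<dots> = K" using assms by (intro Max_eqI) auto
  finally have opt: "opt_index K (geom_vals q) (geom_prob K q) = K" .
  have "(\<Sum>i=1..K-1. geom_prob K q i * geom_vals q i)
      = (\<Sum>i=1..K-1. geom_prob K q i / (\<Sum>j=i..K. geom_prob K q j))"
    using welfare by (intro sum.cong) auto
  hence lost: "(\<Sum>i=1..K-1. geom_prob K q i * geom_vals q i) = G"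
    using sum_hazard_geom_prob[OF \<open>0 < q\<close>, of K] by (simp add: G_def)
  have "geom_prob K q K * geom_vals q K = 1"
    using welfare[of K] assms by (simp add: geom_prob_def)
  moreover have "{1..K} = insert K {1..K-1}" using assms by auto
  ultimately have "(\<Sum>i=1..K. geom_prob K q i * geom_vals q i) = 1 + G"
    using lost assms by simp
  thus ?thesis using opt lost by (simp add: ELR1_def)
qed

lemma powr_minus_inverse_nat:
  fixes r :: real and n :: nat
  assumes "1 < r" "0 < n"
  defines "q \<equiv> r powr (- 1 / real n)"
  shows "0 < q" "q < 1" "q ^ n = 1 / r"
proof -
  show "0 < q" using assms by (simp add: q_def)
  show "q < 1" unfolding q_def using assms by (intro powr_less_one) (auto simp: divide_neg_pos)
  have "q ^ n = r powr (- 1 / real n * real n)"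
    using assms by (simp add: q_def powr_realpow[symmetric] powr_powr)
  thus "q ^ n = 1 / r" using assms by (simp add: powr_minus_divide)
qed

theorem proposition7:
  fixes r :: real and K :: nat
  assumes "r > 1" and "K \<ge> 2"
  shows "gamma_star r K = real (K - 1) * (1 - r powr (- 1 / real (K - 1)))
     \<and> eta r K = gamma_star r K / (1 + gamma_star r K)"
proof -
  define q where "q = r powr (- 1 / real (K - 1))"
  define G where "G = real (K - 1) * (1 - q)"
  have q: "0 < q" "q < 1" "q ^ (K - 1) = 1 / r"
    using powr_minus_inverse_nat[of r "K - 1"] assms by (simp_all add: q_def)
  have "1 \<le> K" using assms by simp
  have "gamma_star r K = G" unfolding gamma_star_def
  proof (rule cSup_eq_maximum)
    have "geom_prob K q K = 1 / r" using q(3) by (simp add: geom_prob_def)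
    thus "G \<in> {(\<Sum>i=1..K-1. p i / (\<Sum>j=i..K. p j)) | p. valid_prob K p \<and> p K = 1 / r}"
      using valid_prob_geom_prob[OF q(1,2) \<open>1 \<le> K\<close>] sum_hazard_geom_prob[OF q(1), of K]
      unfolding G_def by force
    show "v \<le> G" if "v \<in> {(\<Sum>i=1..K-1. p i / (\<Sum>j=i..K. p j)) | p. valid_prob K p \<and> p K = 1 / r}" for v
      using that sum_hazard_le[of K _ K q] \<open>1 \<le> K\<close> q by (auto simp: G_def)
  qed
  moreover have "eta r K = G / (1 + G)" unfolding eta_def
  proof (rule cSup_eq_maximum)
    show "G / (1 + G) \<in> {ELR1 K x p | x p. valid_vals r K x \<and> valid_prob K p}"
      using ELR1_geom[OF q(1) \<open>1 \<le> K\<close>] valid_vals_geom_vals[OF q] valid_prob_geom_prob[OF q(1,2) \<open>1 \<le> K\<close>]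
      unfolding G_def by force
    show "v \<le> G / (1 + G)" if "v \<in> {ELR1 K x p | x p. valid_vals r K x \<and> valid_prob K p}" for v
      using that ELR1_le[OF _ _ \<open>1 \<le> K\<close> q(1,2)] q(3) by (auto simp: G_def)
  qed
  ultimately show ?thesis by (simp add: G_def q_def)
qed

end
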